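(* In the setting below, for an integer $t \geq 1$, if $\eta \geq \eta_0$ and $|\tilde{w}_t| \leq \frac{1}{2}\gamma\hat{w}_t$, then $F(w_t) \leq 1/(8\eta)$.
   Context: Dimension $d=2$. Data $x_1,\dots,x_n\in\mathbb{R}^2$ with $\|x_i\|\le 1$, linearly separable (some $w$ has $\langle w,x_i\rangle>0$ for all $i$). $F(w) = \frac{1}{n}\sum_{i=1}^n \log(1+\exp(-\langle w, x_i\rangle))$. Maximum margin $\gamma = \max_{\|w\|=1}\min_i \langle w, x_i\rangle$ with maximizer the unit vector $w_*$; $v_*$ is a fixed unit vector orthogonal to $w_*$. Gradient descent: $w_0=0$, $w_{t+1} = w_t - \eta\nabla F(w_t)$ with constant $\eta>0$. $\hat{w}_t = \langle w_t, w_*\rangle$, $\tilde{w}_t = \langle w_t, v_*\rangle$. $\eta_0 = \max(n, \frac{32}{\gamma^2}\log\frac{256}{\gamma^2})$. *)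

theory Defs
  imports "HOL-Analysis.Analysis"
begin

definition logloss :: "nat \<Rightarrow> (nat \<Rightarrow> real^2) \<Rightarrow> real^2 \<Rightarrow> real" where
  "logloss n x w = (1 / real n) * (\<Sum>i<n. ln (1 + exp (- (w \<bullet> x i))))"

definition logloss_grad :: "nat \<Rightarrow> (nat \<Rightarrow> real^2) \<Rightarrow> real^2 \<Rightarrow> real^2" where
  "logloss_grad n x w = (1 / real n) *\<^sub>R (\<Sum>i<n. (- 1 / (1 + exp (w \<bullet> x i))) *\<^sub>R x i)"

primrec gd :: "nat \<Rightarrow> (nat \<Rightarrow> real^2) \<Rightarrow> real \<Rightarrow> nat \<Rightarrow> real^2" where
  "gd n x \<eta> 0 = 0"
| "gd n x \<eta> (Suc t) = gd n x \<eta> t - \<eta> *\<^sub>R logloss_grad n x (gd n x \<eta> t)"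

definition margin :: "nat \<Rightarrow> (nat \<Rightarrow> real^2) \<Rightarrow> real^2 \<Rightarrow> real" where
  "margin n x w = Min ((\<lambda>i. w \<bullet> x i) ` {..<n})"

definition max_margin :: "nat \<Rightarrow> (nat \<Rightarrow> real^2) \<Rightarrow> real" where
  "max_margin n x = (SUP w \<in> sphere 0 1. margin n x w)"

definition eta0 :: "nat \<Rightarrow> real \<Rightarrow> real" where
  "eta0 n \<gamma> = max (real n) (32 / \<gamma>\<^sup>2 * ln (256 / \<gamma>\<^sup>2))"

end

theory Submission
  imports Defs
begin

text \<open>Every step of gradient descent increases the component along \<open>w_star\<close>, and the first step
  already makes it at least \<open>\<eta>\<gamma>/2\<close>. In the plane, \<open>w_star\<close> and \<open>v_star\<close> form an orthonormal basis,
  so when the orthogonal component is at most \<open>\<gamma>/2\<close> times the parallel one, every margin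
  \<open>\<langle>w\<^sub>t, x\<^sub>i\<rangle>\<close> is at least \<open>\<eta>\<gamma>\<^sup>2/4\<close>. Bounding \<open>ln (1 + e\<^sup>-\<^sup>z) \<le> e\<^sup>-\<^sup>z\<close> gives
  \<open>F(w\<^sub>t) \<le> exp (-\<eta>\<gamma>\<^sup>2/4)\<close>, which is at most \<open>1/(8\<eta>)\<close> once \<open>\<eta> \<ge> \<eta>\<^sub>0\<close>.\<close>

lemma orthonormal_pair_expand:
  fixes u v z :: "'a::euclidean_space"
  assumes "DIM('a) = 2" and "norm u = 1" and "norm v = 1" and "u \<bullet> v = 0"
  shows "z = (z \<bullet> u) *\<^sub>R u + (z \<bullet> v) *\<^sub>R v"
proof -
  have "u \<noteq> v" using assms(2,4) by (auto simp: norm_eq_1)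
  have orth: "pairwise orthogonal {u, v}"
    using assms(4) by (simp add: pairwise_insert orthogonal_def inner_commute)
  have "independent {u, v}"
    using assms(2,3) by (intro pairwise_orthogonal_independent[OF orth]) auto
  then have "UNIV \<subseteq> span {u, v}"
    using assms(1) \<open>u \<noteq> v\<close> by (intro card_ge_dim_independent) auto
  then have "(\<Sum>b\<in>{u, v}. (z \<bullet> b) *\<^sub>R b) = z"
    using assms(2,3) by (intro orthonormal_basis_expand[OF orth]) auto
  then show ?thesis using \<open>u \<noteq> v\<close> by simp
qed

lemma inner_ge_in_cone:
  fixes u v w y :: "'a::euclidean_space"
  assumes "DIM('a) = 2" and "norm u = 1" and "norm v = 1" and "u \<bullet> v = 0"
    and "norm y \<le> 1" and "0 < \<gamma>" and "\<gamma> \<le> u \<bullet> y"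
    and cone: "\<bar>w \<bullet> v\<bar> \<le> \<gamma> / 2 * (w \<bullet> u)"
  shows "\<gamma> / 2 * (w \<bullet> u) \<le> w \<bullet> y"
proof -
  have "0 \<le> \<gamma> * (w \<bullet> u)" using cone abs_ge_zero[of "w \<bullet> v"] by linarith
  then have "0 \<le> w \<bullet> u" using \<open>0 < \<gamma>\<close> by (simp add: zero_le_mult_iff)
  have "w \<bullet> y = (w \<bullet> u) * (u \<bullet> y) + (w \<bullet> v) * (v \<bullet> y)"
    using orthonormal_pair_expand[OF assms(1-4), of w] by (metis inner_add_left inner_scaleR_left)
  moreover have "\<gamma> * (w \<bullet> u) \<le> (w \<bullet> u) * (u \<bullet> y)"
    using \<open>0 \<le> w \<bullet> u\<close> \<open>\<gamma> \<le> u \<bullet> y\<close> by (simp add: mult.commute mult_right_mono)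
  moreover have "\<bar>(w \<bullet> v) * (v \<bullet> y)\<bar> \<le> \<bar>w \<bullet> v\<bar>"
    using Cauchy_Schwarz_ineq2[of v y] \<open>norm v = 1\<close> \<open>norm y \<le> 1\<close>
    by (simp add: abs_mult mult_left_le)
  ultimately show ?thesis using cone by linarith
qed

lemma margin_le:
  assumes "i < n"
  shows "margin n x w \<le> w \<bullet> x i"
  unfolding margin_def using assms by (intro Min_le) auto

lemma margin_le_one:
  assumes "n \<ge> 1" and "\<And>i. i < n \<Longrightarrow> norm (x i) \<le> 1" and "norm w = 1"
  shows "margin n x w \<le> 1"
proof -
  have "margin n x w \<le> w \<bullet> x 0" using assms(1) by (intro margin_le) simp
  also have "\<dots> \<le> 1"
    using norm_cauchy_schwarz[of w "x 0"] assms(1) assms(2)[of 0] assms(3) by simp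
  finally show ?thesis .
qed

lemma max_margin_pos:
  assumes "n \<ge> 1" and "\<And>i. i < n \<Longrightarrow> norm (x i) \<le> 1" and "\<exists>w. \<forall>i<n. w \<bullet> x i > 0"
  shows "max_margin n x > 0"
proof -
  obtain w where w: "\<forall>i<n. w \<bullet> x i > 0" using assms(3) by blast
  then have "w \<noteq> 0" using assms(1) by fastforce
  define u where "u = w /\<^sub>R norm w"
  have u: "u \<in> sphere 0 1" unfolding u_def using \<open>w \<noteq> 0\<close> by simp
  have "margin n x u > 0" unfolding margin_def
    using assms(1) w \<open>w \<noteq> 0\<close> by (subst Min_gr_iff) (auto simp: u_def lessThan_empty_iff)
  moreover have "bdd_above (margin n x ` sphere 0 1)"
    using margin_le_one[OF assms(1,2)] by (intro bdd_aboveI2) simp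
  ultimately show ?thesis
    unfolding max_margin_def using cSUP_upper[OF u] by (meson less_le_trans)
qed

lemma inner_gd_Suc:
  "gd n x \<eta> (Suc s) \<bullet> u
    = gd n x \<eta> s \<bullet> u + \<eta> / real n * (\<Sum>i<n. (u \<bullet> x i) / (1 + exp (gd n x \<eta> s \<bullet> x i)))"
proof -
  have "logloss_grad n x (gd n x \<eta> s) \<bullet> u
      = - (1 / real n) * (\<Sum>i<n. (u \<bullet> x i) / (1 + exp (gd n x \<eta> s \<bullet> x i)))"
    unfolding logloss_grad_def inner_scaleR_left inner_sum_left
    by (simp add: sum_negf[symmetric] sum_distrib_left inner_commute)
  then show ?thesis by (simp add: inner_diff_left)
qed

lemma inner_gd_ge:
  assumes "n \<ge> 1" and "\<eta> > 0" and "c \<ge> 0" and margin: "\<And>i. i < n \<Longrightarrow> c \<le> u \<bullet> x i"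
    and "s \<ge> 1"
  shows "\<eta> * c / 2 \<le> gd n x \<eta> s \<bullet> u"
  using \<open>s \<ge> 1\<close>
proof (induction s rule: dec_induct)
  case base
  have "real n * (c / 2) \<le> (\<Sum>i<n. (u \<bullet> x i) / (1 + exp (gd n x \<eta> 0 \<bullet> x i)))"
    using sum_mono[of "{..<n}" "\<lambda>_. c / 2"] margin by simp
  then have "\<eta> / real n * (real n * (c / 2))
      \<le> \<eta> / real n * (\<Sum>i<n. (u \<bullet> x i) / (1 + exp (gd n x \<eta> 0 \<bullet> x i)))"
    using \<open>\<eta> > 0\<close> by (intro mult_left_mono) auto
  then show ?case
    using \<open>n \<ge> 1\<close> unfolding One_nat_def inner_gd_Suc[of n x \<eta> 0] by simp
next
  case (step s)
  have "0 \<le> \<eta> / real n * (\<Sum>i<n. (u \<bullet> x i) / (1 + exp (gd n x \<eta> s \<bullet> x i)))"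
    using margin \<open>c \<ge> 0\<close> \<open>\<eta> > 0\<close> \<open>n \<ge> 1\<close>
    by (intro mult_nonneg_nonneg sum_nonneg divide_nonneg_pos) (auto intro: order.trans simp: add_pos_pos)
  then show ?case using step.IH unfolding inner_gd_Suc by linarith
qed

lemma logloss_le_exp:
  assumes "n \<ge> 1" and "\<And>i. i < n \<Longrightarrow> m \<le> w \<bullet> x i"
  shows "logloss n x w \<le> exp (- m)"
proof -
  have "ln (1 + exp (- (w \<bullet> x i))) \<le> exp (- m)" if "i < n" for i
  proof -
    have "exp (- (w \<bullet> x i)) \<le> exp (- m)" using assms(2)[OF that] by simp
    then show ?thesis using ln_add_one_self_le_self[OF exp_ge_zero, of "- (w \<bullet> x i)"] by linarith
  qed
  then have "logloss n x w \<le> 1 / real n * (\<Sum>i<n. exp (- m))"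
    unfolding logloss_def by (intro mult_left_mono sum_mono) auto
  then show ?thesis using assms(1) by simp
qed

lemma exp_neg_le_inverse:
  fixes a \<eta> :: real
  assumes "0 < a" and "a \<le> 64" and "0 < \<eta>" and large: "8 / a * ln (64 / a) \<le> \<eta>"
  shows "exp (- (a * \<eta>)) \<le> 1 / (8 * \<eta>)"
proof -
  define u where "u = a * \<eta>"
  define L where "L = ln (64 / a)"
  have "u > 0" unfolding u_def using assms by simp
  have "L \<ge> 0" unfolding L_def using assms(1,2) by simp
  have "8 * L \<le> u" using large \<open>0 < a\<close> unfolding u_def L_def by (simp add: field_simps)
  have "ln u \<le> u / 2"
  proof -
    have "ln (u / 2) \<le> u / 2 - 1" using \<open>u > 0\<close> by (intro ln_le_minus_one) simp
    moreover have "ln (2::real) \<le> 1" using ln_le_minus_one[of 2] by simp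
    ultimately show ?thesis using \<open>u > 0\<close> by (simp add: ln_div)
  qed
  have "ln (8 * \<eta>) = ln 8 - ln a + ln u"
    unfolding u_def using assms(1,3) by (simp add: ln_mult)
  also have "\<dots> \<le> L + ln u" unfolding L_def using assms(1) by (simp add: ln_div)
  also have "\<dots> \<le> u" using \<open>ln u \<le> u / 2\<close> \<open>8 * L \<le> u\<close> \<open>L \<ge> 0\<close> by linarith
  finally have "8 * \<eta> \<le> exp u"
    using assms(3) by (metis exp_ln exp_le_cancel_iff mult_pos_pos zero_less_numeral)
  then show ?thesis using assms(3) unfolding u_def by (simp add: exp_minus field_simps)
qed

theorem lemma13:
  fixes n :: nat and x :: "nat \<Rightarrow> real^2" and \<eta> :: real
    and w_star v_star :: "real^2" and t :: nat
  assumes n_pos: "n \<ge> 1"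
    and bounded: "\<And>i. i < n \<Longrightarrow> norm (x i) \<le> 1"
    and separable: "\<exists>w. \<forall>i<n. w \<bullet> x i > 0"
    and w_star_unit: "norm w_star = 1"
    and w_star_max: "margin n x w_star = max_margin n x"
    and v_star_unit: "norm v_star = 1"
    and v_star_orth: "v_star \<bullet> w_star = 0"
    and eta_pos: "\<eta> > 0"
    and t_pos: "t \<ge> 1"
    and eta_large: "\<eta> \<ge> eta0 n (max_margin n x)"
    and cond: "\<bar>gd n x \<eta> t \<bullet> v_star\<bar> \<le> (1/2) * max_margin n x * (gd n x \<eta> t \<bullet> w_star)"
  shows "logloss n x (gd n x \<eta> t) \<le> 1 / (8 * \<eta>)"
proof -
  define \<gamma> where "\<gamma> = max_margin n x"
  have "0 < \<gamma>" unfolding \<gamma>_def by (rule max_margin_pos[OF n_pos bounded separable])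
  have "\<gamma> \<le> 1" unfolding \<gamma>_def using margin_le_one n_pos bounded w_star_unit w_star_max by metis
  have margin: "\<gamma> \<le> w_star \<bullet> x i" if "i < n" for i
    unfolding \<gamma>_def using margin_le[OF that] w_star_max by metis
  have "\<eta> * \<gamma> / 2 \<le> gd n x \<eta> t \<bullet> w_star"
    using inner_gd_ge n_pos eta_pos \<open>0 < \<gamma>\<close> margin t_pos by (simp add: less_imp_le)
  then have "\<gamma> / 2 * (\<eta> * \<gamma> / 2) \<le> \<gamma> / 2 * (gd n x \<eta> t \<bullet> w_star)"
    using \<open>0 < \<gamma>\<close> by (intro mult_left_mono) auto
  also have "\<dots> \<le> gd n x \<eta> t \<bullet> x i" if "i < n" for i
    using v_star_orth cond unfolding \<gamma>_def[symmetric]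
    by (intro inner_ge_in_cone[OF _ w_star_unit v_star_unit _ bounded[OF that] \<open>0 < \<gamma>\<close> margin[OF that]])
      (simp_all add: inner_commute)
  finally have "\<gamma>\<^sup>2 / 4 * \<eta> \<le> gd n x \<eta> t \<bullet> x i" if "i < n" for i
    using that by (simp add: power2_eq_square mult_ac)
  then have "logloss n x (gd n x \<eta> t) \<le> exp (- (\<gamma>\<^sup>2 / 4 * \<eta>))"
    using n_pos by (intro logloss_le_exp)
  also have "\<dots> \<le> 1 / (8 * \<eta>)"
    using eta_large \<open>0 < \<gamma>\<close> power_le_one[OF _ \<open>\<gamma> \<le> 1\<close>, of 2] eta_pos
    by (intro exp_neg_le_inverse) (auto simp: eta0_def \<gamma>_def[symmetric])
  finally show ?thesis .
qed

end
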